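(* A strongly connected tournament $G$ is triangle-connected if and only if $G$ has no nontrivial homogeneous set that contains (the vertex set of) a cyclic triangle.
   Context: A tournament is a finite, non-null, loopless directed graph in which for any two distinct vertices $u,v$ there is exactly one edge with both ends in $\{u,v\}$; write $u\to v$ for the edge from $u$ to $v$. A homogeneous set of $G$ is a set $X\subseteq V(G)$ such that each $v\in V(G)\setminus X$ either has $v\to x$ for all $x\in X$ or $x\to v$ for all $x\in X$; it is nontrivial if $1<|X|<|V(G)|$. $G$ is strongly connected if for any two vertices $u,v$ there are directed paths from $u$ to $v$ and from $v$ to $u$. Two cyclic triangles in $G$ are adjacent if they share exactly two vertices; cyclic triangles $C,C'$ are triangle-connected if there is a sequence $C_1,\dots,C_n$ ($n\ge1$) of cyclic triangles with $C_1=C$, $C_n=C'$, and $C_i$ adjacent to $C_{i+1}$ for all $i$. A tournament is triangle-connected if it is strongly connected and any two of its cyclic triangles are triangle-connected. *)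

theory Defs
  imports Main
begin

definition tournament :: "'a set \<Rightarrow> ('a \<Rightarrow> 'a \<Rightarrow> bool) \<Rightarrow> bool" where
  "tournament V E \<longleftrightarrow> finite V \<and> V \<noteq> {} \<and>
     (\<forall>u v. E u v \<longrightarrow> u \<in> V \<and> v \<in> V) \<and>
     (\<forall>v. \<not> E v v) \<and>
     (\<forall>u\<in>V. \<forall>v\<in>V. u \<noteq> v \<longrightarrow> (E u v \<longleftrightarrow> \<not> E v u))"

definition homogeneous_set :: "'a set \<Rightarrow> ('a \<Rightarrow> 'a \<Rightarrow> bool) \<Rightarrow> 'a set \<Rightarrow> bool" where
  "homogeneous_set V E X \<longleftrightarrow> X \<subseteq> V \<and>
     (\<forall>v \<in> V - X. (\<forall>x\<in>X. E v x) \<or> (\<forall>x\<in>X. E x v))"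

definition nontrivial_homogeneous_set :: "'a set \<Rightarrow> ('a \<Rightarrow> 'a \<Rightarrow> bool) \<Rightarrow> 'a set \<Rightarrow> bool" where
  "nontrivial_homogeneous_set V E X \<longleftrightarrow> homogeneous_set V E X \<and> 1 < card X \<and> card X < card V"

definition strongly_connected :: "'a set \<Rightarrow> ('a \<Rightarrow> 'a \<Rightarrow> bool) \<Rightarrow> bool" where
  "strongly_connected V E \<longleftrightarrow> (\<forall>u\<in>V. \<forall>v\<in>V. E\<^sup>*\<^sup>* u v)"

definition cyclic_triangle :: "'a set \<Rightarrow> ('a \<Rightarrow> 'a \<Rightarrow> bool) \<Rightarrow> 'a set \<Rightarrow> bool" where
  "cyclic_triangle V E T \<longleftrightarrow> T \<subseteq> V \<and>
     (\<exists>a b c. T = {a, b, c} \<and> a \<noteq> b \<and> b \<noteq> c \<and> a \<noteq> c \<and> E a b \<and> E b c \<and> E c a)"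

definition adjacent_triangles :: "'a set \<Rightarrow> ('a \<Rightarrow> 'a \<Rightarrow> bool) \<Rightarrow> 'a set \<Rightarrow> 'a set \<Rightarrow> bool" where
  "adjacent_triangles V E C C' \<longleftrightarrow> cyclic_triangle V E C \<and> cyclic_triangle V E C' \<and>
     card (C \<inter> C') = 2"

definition triangle_connected_pair :: "'a set \<Rightarrow> ('a \<Rightarrow> 'a \<Rightarrow> bool) \<Rightarrow> 'a set \<Rightarrow> 'a set \<Rightarrow> bool" where
  "triangle_connected_pair V E C C' \<longleftrightarrow> cyclic_triangle V E C \<and> cyclic_triangle V E C' \<and>
     (adjacent_triangles V E)\<^sup>*\<^sup>* C C'"

definition triangle_connected :: "'a set \<Rightarrow> ('a \<Rightarrow> 'a \<Rightarrow> bool) \<Rightarrow> bool" where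
  "triangle_connected V E \<longleftrightarrow> strongly_connected V E \<and>
     (\<forall>C C'. cyclic_triangle V E C \<and> cyclic_triangle V E C' \<longrightarrow> triangle_connected_pair V E C C')"

end

theory Submission
  imports Defs
begin

text \<open>
  For a cyclic triangle D let H(D) be the union of all cyclic triangles triangle-connected
  to D. H(D) is homogeneous: a vertex outside H(D) that beats one vertex of a triangle of
  the class and loses to another forms a cyclic triangle with two of its vertices, which is
  adjacent to it. On the other hand, the class of a triangle inside a homogeneous set X never
  leaves X, whereas strong connectivity yields a cyclic triangle with one vertex in X and two outside.

  So a triangle-connected tournament has no nontrivial homogeneous set containing a cyclic
  triangle, and if there is none, every H(D) is the whole vertex set. It then suffices that
  two cyclic triangles through a common vertex are triangle-connected. This follows from a
  case analysis of the edges between them; in the hardest case one triangle lies among the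
  apexes of an edge pq of the other, i.e. the vertices z with q \<rightarrow> z \<rightarrow> p, and a chain of
  adjacent triangles from it to a triangle through p must pass a triangle on the edge pq.
\<close>

lemma rtranclp_exit:
  assumes "r\<^sup>*\<^sup>* a z" "P a" "\<not> P z"
  shows "\<exists>u w. P u \<and> \<not> P w \<and> r u w"
  using assms by (induction rule: rtranclp_induct) auto

lemma card_Int_insert3_ge2D:
  assumes "2 \<le> card (C \<inter> X)" "C = {w, p, q}" "w \<notin> X"
  shows "p \<in> X" "q \<in> X"
proof -
  have "card (C \<inter> X) \<le> card ({p, q} \<inter> X)"
    using assms(2,3) by (intro card_mono) auto
  then have "2 \<le> card ({p, q} \<inter> X)" using assms(1) by linarith
  then show "p \<in> X" "q \<in> X"
    by (auto simp: Int_insert_left split: if_splits)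
qed

locale tournament_graph =
  fixes V :: "'a set" and E :: "'a \<Rightarrow> 'a \<Rightarrow> bool"
  assumes tournament: "tournament V E"
begin

abbreviation triangle :: "'a set \<Rightarrow> bool" where
  "triangle \<equiv> cyclic_triangle V E"

abbreviation adjacent :: "'a set \<Rightarrow> 'a set \<Rightarrow> bool" where
  "adjacent \<equiv> adjacent_triangles V E"

abbreviation tconnected :: "'a set \<Rightarrow> 'a set \<Rightarrow> bool" where
  "tconnected \<equiv> adjacent\<^sup>*\<^sup>*"

lemma finite_V: "finite V"
  using tournament unfolding tournament_def by blast

lemma edge_in_V: "E u v \<Longrightarrow> u \<in> V" "E u v \<Longrightarrow> v \<in> V"
  using tournament unfolding tournament_def by blast+

lemma edge_asym: "E u v \<Longrightarrow> \<not> E v u"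
  using tournament unfolding tournament_def by metis

lemma edge_neq: "E u v \<Longrightarrow> u \<noteq> v"
  using edge_asym by blast

lemma edge_total: "u \<in> V \<Longrightarrow> v \<in> V \<Longrightarrow> u \<noteq> v \<Longrightarrow> E u v \<or> E v u"
  using tournament unfolding tournament_def by blast

lemma triangleI:
  assumes "E a b" "E b c" "E c a"
  shows "triangle {a, b, c}"
proof -
  have "{a, b, c} \<subseteq> V" using assms edge_in_V by blast
  moreover have "a \<noteq> b" "b \<noteq> c" "a \<noteq> c" using assms edge_neq by blast+
  ultimately show ?thesis unfolding cyclic_triangle_def using assms by blast
qed

lemma triangle_subset: "triangle C \<Longrightarrow> C \<subseteq> V"
  unfolding cyclic_triangle_def by blast

lemma triangle_at:
  assumes "triangle C" "a \<in> C"
  obtains p q where "C = {a, p, q}" "E a p" "E p q" "E q a"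
proof -
  obtain x y z where C: "C = {x, y, z}" "E x y" "E y z" "E z x"
    using assms(1) unfolding cyclic_triangle_def by blast
  then have "a = x \<or> a = y \<or> a = z" using assms(2) by blast
  then show thesis
  proof (elim disjE)
    assume "a = x" then show thesis using C by (intro that[of y z]) auto
  next
    assume "a = y" then show thesis using C by (intro that[of z x]) auto
  next
    assume "a = z" then show thesis using C by (intro that[of x y]) auto
  qed
qed

lemma card_triangle: "triangle C \<Longrightarrow> card C = 3"
  unfolding cyclic_triangle_def using edge_neq by auto

lemma finite_triangle: "triangle C \<Longrightarrow> finite C"
  using triangle_subset finite_V finite_subset by blast

lemma tconnected_sharing:
  assumes "triangle C" "triangle D" "{u, w} \<subseteq> C \<inter> D" "E u w"
  shows "tconnected C D"
proof (cases "C = D")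
  case False
  have "\<not> C \<subseteq> D"
    using False card_subset_eq[OF finite_triangle[OF assms(2)]] card_triangle assms(1,2) by auto
  then have "card (C \<inter> D) < card C"
    using finite_triangle[OF assms(1)] by (intro psubset_card_mono) auto
  moreover have "card {u, w} \<le> card (C \<inter> D)"
    using assms(1,3) finite_triangle by (intro card_mono) auto
  ultimately show ?thesis
    using assms(1,2) edge_neq[OF assms(4)] card_triangle unfolding adjacent_triangles_def by auto
qed simp

lemma tconnected_sym: "tconnected C D \<Longrightarrow> tconnected D C"
  by (induction rule: rtranclp_induct)
     (auto simp: adjacent_triangles_def Int_commute intro: converse_rtranclp_into_rtranclp)

lemma tconnected_triangle: "tconnected C D \<Longrightarrow> triangle C \<Longrightarrow> triangle D"
  by (induction rule: rtranclp_induct) (auto simp: adjacent_triangles_def)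

lemma triangle_subset_homogeneous:
  assumes "triangle C" "homogeneous_set V E X" "2 \<le> card (C \<inter> X)"
  shows "C \<subseteq> X"
proof
  fix w assume "w \<in> C"
  show "w \<in> X"
  proof (rule ccontr)
    assume "w \<notin> X"
    obtain p q where C: "C = {w, p, q}" "E w p" "E p q" "E q w"
      using triangle_at[OF assms(1) \<open>w \<in> C\<close>] .
    have "p \<in> X" "q \<in> X" using card_Int_insert3_ge2D[OF assms(3) C(1) \<open>w \<notin> X\<close>] by blast+
    moreover have "w \<in> V" using C(2) edge_in_V by blast
    ultimately show False
      using assms(2) \<open>w \<notin> X\<close> C(2,4) edge_asym unfolding homogeneous_set_def by blast
  qed
qed

lemma tconnected_in_homogeneous:
  assumes "homogeneous_set V E X" "C \<subseteq> X" "tconnected C D"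
  shows "D \<subseteq> X"
  using assms(3)
proof (induction rule: rtranclp_induct)
  case (step D D')
  then have D': "card (D \<inter> D') = 2" "triangle D'" unfolding adjacent_triangles_def by auto
  have "card (D \<inter> D') \<le> card (D' \<inter> X)"
    using step.IH D'(2) finite_triangle by (intro card_mono) auto
  then show ?case using triangle_subset_homogeneous[OF D'(2) assms(1)] D'(1) by simp
qed (use assms(2) in simp)

lemma triangle_leaving_homogeneous:
  assumes "strongly_connected V E" "homogeneous_set V E X" "x \<in> X" "v \<in> V" "v \<notin> X"
  obtains a b where "a \<notin> X" "b \<notin> X" "triangle {x, a, b}"
proof -
  have xV: "x \<in> V" using assms(2,3) unfolding homogeneous_set_def by blast
  have side: "(\<forall>z\<in>X. E w z) \<or> (\<forall>z\<in>X. E z w)" if "w \<in> V" "w \<notin> X" for w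
    using assms(2) that unfolding homogeneous_set_def by blast
  define A where "A = {w \<in> V. w \<notin> X \<and> (\<forall>z\<in>X. E z w)}"
  obtain y u where "y \<in> X" "u \<notin> X" "E y u"
    using rtranclp_exit[of E x v "\<lambda>z. z \<in> X"] assms xV unfolding strongly_connected_def by blast
  then have "u \<in> A" using side[of u] edge_in_V edge_asym unfolding A_def by blast
  then obtain a b where ab: "a \<in> A" "b \<notin> A" "E a b"
    using rtranclp_exit[of E u x "\<lambda>z. z \<in> A"] assms(1,3) xV
    unfolding strongly_connected_def A_def by blast
  have "b \<notin> X" using ab(1,3) edge_asym unfolding A_def by blast
  then have "E b x" using side[of b] ab(2,3) edge_in_V assms(3) unfolding A_def by blast
  moreover have "a \<notin> X" "E x a" using ab(1) assms(3) unfolding A_def by blast+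
  ultimately show thesis using that triangleI ab(3) \<open>b \<notin> X\<close> by blast
qed

lemma adjacent_triangle_through:
  assumes "triangle C" "v \<in> V" "v \<notin> C" "x \<in> C" "E v x" "y \<in> C" "E y v"
  obtains C' where "adjacent C C'" "v \<in> C'"
proof -
  obtain a b c where C: "C = {a, b, c}" "E a b" "E b c" "E c a"
    using assms(1) unfolding cyclic_triangle_def by blast
  have "E v a \<or> E a v" "E v b \<or> E b v" "E v c \<or> E c v"
    using edge_total assms(2,3) C edge_in_V by auto
  then obtain r s where rs: "(r, s) \<in> {(a, b), (b, c), (c, a)}" "E v r" "E s v"
    using assms(4-7) C edge_asym by blast
  have "triangle {v, r, s}" using triangleI[OF rs(2) _ rs(3)] rs(1) C by auto
  moreover have "C \<inter> {v, r, s} = {r, s}" "r \<noteq> s" using rs(1) C assms(3) edge_neq by auto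
  ultimately show thesis using that assms(1) unfolding adjacent_triangles_def by fastforce
qed

definition triangle_hull :: "'a set \<Rightarrow> 'a set" where
  "triangle_hull D = \<Union>{C. tconnected D C}"

lemma subset_triangle_hull: "D \<subseteq> triangle_hull D"
  unfolding triangle_hull_def by blast

lemma triangle_hull_subset: "triangle D \<Longrightarrow> triangle_hull D \<subseteq> V"
  unfolding triangle_hull_def using tconnected_triangle triangle_subset by blast

lemma triangle_hull_side:
  assumes "triangle D" "v \<in> V" "v \<notin> triangle_hull D" "tconnected D C"
  shows "(\<forall>x\<in>C. E v x) \<or> (\<forall>x\<in>C. E x v)"
proof (rule ccontr)
  assume "\<not> ?thesis"
  then obtain x y where xy: "x \<in> C" "\<not> E v x" "y \<in> C" "\<not> E y v" by blast
  have C: "triangle C" using tconnected_triangle assms(1,4) by blast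
  have "v \<notin> C" using assms(3,4) unfolding triangle_hull_def by blast
  then have "E x v" "E v y" using edge_total assms(2) xy triangle_subset[OF C] by blast+
  then obtain C' where "adjacent C C'" "v \<in> C'"
    using adjacent_triangle_through[OF C assms(2) \<open>v \<notin> C\<close>] xy by blast
  then show False
    using assms(3,4) unfolding triangle_hull_def by (blast intro: rtranclp.rtrancl_into_rtrancl)
qed

lemma tconnected_preserves_all:
  assumes "\<And>C. tconnected D C \<Longrightarrow> (\<forall>x\<in>C. R x) \<or> (\<forall>x\<in>C. \<not> R x)"
    and "\<forall>x\<in>D. R x" "tconnected D C"
  shows "\<forall>x\<in>C. R x"
  using assms(3)
proof (induction rule: rtranclp_induct)
  case (step C1 C2)
  then have "C1 \<inter> C2 \<noteq> {}" unfolding adjacent_triangles_def by force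
  then show ?case using assms(1) step by (blast intro: rtranclp.rtrancl_into_rtrancl)
qed (use assms(2) in simp)

lemma homogeneous_triangle_hull:
  assumes "triangle D"
  shows "homogeneous_set V E (triangle_hull D)"
  unfolding homogeneous_set_def
proof (intro conjI ballI)
  show "triangle_hull D \<subseteq> V" using triangle_hull_subset[OF assms] .
  fix v assume v: "v \<in> V - triangle_hull D"
  note side = triangle_hull_side[OF assms, of v]
  have out: "(\<forall>x\<in>C. E v x) \<or> (\<forall>x\<in>C. \<not> E v x)"
   and "in": "(\<forall>x\<in>C. E x v) \<or> (\<forall>x\<in>C. \<not> E x v)" if "tconnected D C" for C
    using side[OF _ _ that] v edge_asym by blast+
  consider "\<forall>x\<in>D. E v x" | "\<forall>x\<in>D. E x v" using side v by blast
  then show "(\<forall>x\<in>triangle_hull D. E v x) \<or> (\<forall>x\<in>triangle_hull D. E x v)"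
  proof cases
    case 1
    then show ?thesis
      using tconnected_preserves_all[OF out] unfolding triangle_hull_def by blast
  next
    case 2
    then show ?thesis
      using tconnected_preserves_all[OF "in"] unfolding triangle_hull_def by blast
  qed
qed

lemma nontrivial_triangle_hull:
  assumes "triangle D" "triangle_hull D \<noteq> V"
  shows "nontrivial_homogeneous_set V E (triangle_hull D)"
proof -
  have "card D \<le> card (triangle_hull D)"
    using subset_triangle_hull triangle_hull_subset[OF assms(1)] finite_V
    by (meson card_mono finite_subset)
  moreover have "card (triangle_hull D) < card V"
    using triangle_hull_subset[OF assms(1)] assms(2) finite_V by (simp add: psubset_card_mono)
  ultimately show ?thesis
    using homogeneous_triangle_hull[OF assms(1)] card_triangle[OF assms(1)]
    unfolding nontrivial_homogeneous_set_def by simp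
qed

definition apexes :: "'a \<Rightarrow> 'a \<Rightarrow> 'a set" where
  "apexes p q = {z. E q z \<and> E z p}"

lemma tconnected_apex:
  assumes "E p q" "triangle B" "{p, q} \<subseteq> B" "z \<in> apexes p q"
  shows "tconnected B {p, q, z}"
  using assms triangleI unfolding apexes_def by (intro tconnected_sharing[of _ _ p q]) auto

lemma tconnected_apex_exit:
  assumes "E p q" "triangle B" "{p, q} \<subseteq> B"
    and "triangle C" "{x, y, w} \<subseteq> C" "E x y" "E y w" "E w x"
    and "x \<in> apexes p q" "y \<in> apexes p q" "w \<notin> apexes p q"
  shows "tconnected B C"
proof -
  have x: "E q x" "E x p" and y: "E q y" "E y p" using assms(9,10) unfolding apexes_def by auto
  have Bx: "tconnected B {p, q, x}" and By: "tconnected B {p, q, y}"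
    using tconnected_apex assms(1-3,9,10) by blast+
  have "w = p \<or> w = q \<or> E p w \<or> E w q"
    using assms(11) edge_total edge_in_V assms(1,8) unfolding apexes_def by blast
  then consider "w = p" | "w = q" | "E p w" | "E w q" by blast
  then show ?thesis
  proof cases
    case 1
    note Bx
    also have "tconnected {p, q, x} C"
      using 1 assms(1,4,5,8) x triangleI by (intro tconnected_sharing[of _ _ w x]) auto
    finally show ?thesis .
  next
    case 2
    note By
    also have "tconnected {p, q, y} C"
      using 2 assms(1,4,5,7) y triangleI by (intro tconnected_sharing[of _ _ y w]) auto
    finally show ?thesis .
  next
    case 3
    note Bx
    also have "tconnected {p, q, x} {p, w, x}"
      using 3 assms(1,8) x triangleI by (intro tconnected_sharing[of _ _ x p]) auto
    also have "tconnected {p, w, x} C"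
      using 3 assms(4,5,8) x triangleI by (intro tconnected_sharing[of _ _ w x]) auto
    finally show ?thesis .
  next
    case 4
    note By
    also have "tconnected {p, q, y} {q, y, w}"
      using 4 assms(1,7) y triangleI by (intro tconnected_sharing[of _ _ q y]) auto
    also have "tconnected {q, y, w} C"
      using 4 assms(4,5,7) y triangleI by (intro tconnected_sharing[of _ _ y w]) auto
    finally show ?thesis .
  qed
qed

lemma tconnected_from_apexes:
  assumes "E p q" "triangle B" "{p, q} \<subseteq> B" "C \<subseteq> apexes p q" "tconnected C D"
  shows "D \<subseteq> apexes p q \<or> tconnected B D"
  using assms(5)
proof (induction rule: rtranclp_induct)
  case (step D1 D2)
  have D2: "triangle D2" "card (D1 \<inter> D2) = 2" using step(2) unfolding adjacent_triangles_def by auto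
  show ?case
  proof (cases "tconnected B D1 \<or> D2 \<subseteq> apexes p q")
    case True
    then show ?thesis using step(2) by (blast intro: rtranclp.rtrancl_into_rtrancl)
  next
    case False
    then have D1: "D1 \<subseteq> apexes p q" using step.IH by blast
    obtain w where w: "w \<in> D2" "w \<notin> apexes p q" using False by blast
    obtain x y where D2w: "D2 = {w, x, y}" "E w x" "E x y" "E y w" using triangle_at[OF D2(1) w(1)] .
    have "card (D1 \<inter> D2) \<le> card (D2 \<inter> apexes p q)"
      using D1 D2(1) finite_triangle by (intro card_mono) auto
    then have "x \<in> apexes p q" "y \<in> apexes p q"
      using card_Int_insert3_ge2D[OF _ D2w(1) w(2)] D2(2) by simp_all
    then show ?thesis
      using tconnected_apex_exit[OF assms(1-3) D2(1), of x y w] D2w w(2) by auto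
  qed
qed (use assms(4) in simp)

lemma tconnected_apex_triangle:
  assumes "E p q" "triangle B" "{p, q} \<subseteq> B" "D \<subseteq> apexes p q" "p \<in> triangle_hull D"
  shows "tconnected B D"
proof -
  obtain C where C: "tconnected D C" "p \<in> C" using assms(5) unfolding triangle_hull_def by blast
  have "p \<notin> apexes p q" using edge_asym[OF assms(1)] unfolding apexes_def by blast
  then have "tconnected B C" using tconnected_from_apexes[OF assms(1-4) C(1)] C(2) by blast
  then show ?thesis using tconnected_sym[OF C(1)] by (meson rtranclp_trans)
qed

lemma tconnected_crossing:
  assumes hull: "\<And>D. triangle D \<Longrightarrow> triangle_hull D = V"
    and T: "E a p" "E p q" "E q a" and D: "E a r" "E r s" "E s a"
    and cross: "E q r" "E s p"
  shows "tconnected {a, p, q} {a, r, s}"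
proof -
  have "E r p \<or> E p r" "E s q \<or> E q s"
    using edge_total edge_in_V edge_asym T D cross by metis+
  then consider "E r p" "E s q" | "E p r" "E q s" | "E r p" "E q s" | "E p r" "E s q" by blast
  then show ?thesis
  proof cases
    case 1
    have "tconnected {a, p, q} {p, q, r}"
      using 1 T cross triangleI by (intro tconnected_sharing[of _ _ p q]) auto
    also have "tconnected {p, q, r} {q, r, s}"
      using 1 T D cross triangleI by (intro tconnected_sharing[of _ _ q r]) auto
    also have "tconnected {q, r, s} {a, r, s}"
      using 1 D cross triangleI by (intro tconnected_sharing[of _ _ r s]) auto
    finally show ?thesis .
  next
    case 2
    have "tconnected {a, p, q} {s, p, q}"
      using 2 T cross triangleI by (intro tconnected_sharing[of _ _ p q]) auto
    also have "tconnected {s, p, q} {r, s, p}"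
      using 2 T D cross triangleI by (intro tconnected_sharing[of _ _ s p]) auto
    also have "tconnected {r, s, p} {a, r, s}"
      using 2 D cross triangleI by (intro tconnected_sharing[of _ _ r s]) auto
    finally show ?thesis .
  next
    case 3
    then have "{a, r, s} \<subseteq> apexes p q" using T D cross unfolding apexes_def by auto
    then show ?thesis
      using tconnected_apex_triangle[of p q "{a, p, q}"] hull[of "{a, r, s}"] T D triangleI edge_in_V
      by auto
  next
    case 4
    then have "{a, p, q} \<subseteq> apexes r s" using T D cross unfolding apexes_def by auto
    then have "tconnected {a, r, s} {a, p, q}"
      using tconnected_apex_triangle[of r s "{a, r, s}"] hull[of "{a, p, q}"] T D triangleI edge_in_V
      by auto
    then show ?thesis by (rule tconnected_sym)
  qed
qed

lemma tconnected_common_vertex: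
  assumes hull: "\<And>D. triangle D \<Longrightarrow> triangle_hull D = V"
    and "triangle T" "triangle D" "a \<in> T" "a \<in> D"
  shows "tconnected T D"
proof -
  obtain p q where T: "T = {a, p, q}" "E a p" "E p q" "E q a" using triangle_at assms(2,4) .
  obtain r s where D: "D = {a, r, s}" "E a r" "E r s" "E s a" using triangle_at assms(3,5) .
  have "E r q \<or> E q r" "E p s \<or> E s p"
    using edge_total edge_in_V edge_asym T D by metis+
  then consider "E r q" | "E p s" | "E q r" "E s p" by blast
  then show ?thesis
  proof cases
    case 1
    have "tconnected T {a, r, q}"
      using 1 T D assms(2) triangleI by (intro tconnected_sharing[of _ _ q a]) auto
    also have "tconnected {a, r, q} D"
      using 1 T D assms(3) triangleI by (intro tconnected_sharing[of _ _ a r]) auto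
    finally show ?thesis .
  next
    case 2
    have "tconnected T {a, p, s}"
      using 2 T D assms(2) triangleI by (intro tconnected_sharing[of _ _ a p]) auto
    also have "tconnected {a, p, s} D"
      using 2 T D assms(3) triangleI by (intro tconnected_sharing[of _ _ s a]) auto
    finally show ?thesis .
  next
    case 3
    then show ?thesis using tconnected_crossing[OF hull] T D by simp
  qed
qed

lemma homogeneous_triangle_separates:
  assumes "strongly_connected V E" "nontrivial_homogeneous_set V E X" "triangle T" "T \<subseteq> X"
  obtains T' where "triangle T'" "\<not> tconnected T T'"
proof -
  have hom: "homogeneous_set V E X" and "X \<noteq> V"
    using assms(2) unfolding nontrivial_homogeneous_set_def by auto
  then obtain v where v: "v \<in> V" "v \<notin> X" unfolding homogeneous_set_def by blast
  obtain x where "x \<in> T" using assms(3) unfolding cyclic_triangle_def by blast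
  then obtain a b where "a \<notin> X" "b \<notin> X" "triangle {x, a, b}"
    using triangle_leaving_homogeneous[OF assms(1) hom _ v] assms(4) by blast
  then show thesis using that tconnected_in_homogeneous[OF hom assms(4)] by blast
qed

lemma tconnected_if_no_homogeneous_triangle:
  assumes none: "\<nexists>X T. nontrivial_homogeneous_set V E X \<and> triangle T \<and> T \<subseteq> X"
    and C: "triangle C" and C': "triangle C'"
  shows "tconnected C C'"
proof -
  have hull: "triangle_hull D = V" if "triangle D" for D
    using nontrivial_triangle_hull[OF that] subset_triangle_hull none that by blast
  obtain a where "a \<in> C'" using C' unfolding cyclic_triangle_def by blast
  then obtain T where "tconnected C T" "a \<in> T"
    using hull[OF C] triangle_subset[OF C'] unfolding triangle_hull_def by blast
  then show ?thesis
    using tconnected_common_vertex[OF hull tconnected_triangle[OF _ C] C'] \<open>a \<in> C'\<close>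
    by (meson rtranclp_trans)
qed

end

theorem corollary4p2:
  assumes "tournament V E" and "strongly_connected V E"
  shows "triangle_connected V E \<longleftrightarrow>
    \<not> (\<exists>X T. nontrivial_homogeneous_set V E X \<and> cyclic_triangle V E T \<and> T \<subseteq> X)"
proof -
  interpret tournament_graph V E using assms(1) by unfold_locales
  show ?thesis
    unfolding triangle_connected_def triangle_connected_pair_def
    using assms(2) homogeneous_triangle_separates tconnected_if_no_homogeneous_triangle
    by metis
qed

end
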